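(* Let $k,n$ be integers with $3\le k\le n/2$. Then coefficient-wise $i(U_{2,n},t)\le i(U_{k,n},t)$, i.e. for every $m\ge0$ the coefficient of $t^m$ in $i(U_{2,n},t)$ is at most the coefficient of $t^m$ in $i(U_{k,n},t)$.
   Context: $U_{k,n}$ denotes the uniform matroid of rank $k$ on $[n]$ (all $k$-subsets are bases), and $i(U_{k,n},t)$ is the Ehrhart polynomial of its matroid polytope $\mathrm{conv}\{\sum_{b\in B}e_b: B\subseteq[n],|B|=k\}$ (the hypersimplex), i.e. the polynomial counting lattice points in its $t$-th dilate. *)

theory Defs
  imports "HOL-Analysis.Analysis" "HOL-Computational_Algebra.Polynomial"
begin

text \<open>The ground set [n] is modelled by a finite type 'n with CARD('n) = n;
  points of R^n are elements of real^'n.\<close>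

definition uniform_matroid_polytope :: "nat \<Rightarrow> (real^'n) set" where
  "uniform_matroid_polytope k =
     convex hull {(\<chi> i. if i \<in> B then 1 else 0) | B :: 'n set. card B = k}"

definition lattice_count :: "(real^'n) set \<Rightarrow> nat \<Rightarrow> nat" where
  "lattice_count P t = card {x. (\<forall>i. x $ i \<in> \<int>) \<and> x \<in> (\<lambda>y. real t *\<^sub>R y) ` P}"

definition ehrhart_poly :: "(real^'n) set \<Rightarrow> real poly" where
  "ehrhart_poly P = (THE p. \<forall>t::nat. poly p (real t) = real (lattice_count P t))"

end

theory Submission
  imports Defs "HOL-Computational_Algebra.Polynomial_FPS"
begin

text \<open>The lattice points of the \<open>t\<close>-th dilate of the hypersimplex \<open>\<Delta>(k, n)\<close> are the integer
  vectors in \<open>[0, t]^n\<close> with coordinate sum \<open>k t\<close> (each of them is a sum of \<open>t\<close> vertices), so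
  inclusion-exclusion gives
  \<open>i(U_{k,n}, t) = 1/(n-1)! \<Sum>_{j<k} (-1)^j C(n, j) ((k - j) t - j + 1)^(n-1)\<close>
  with a rising factorial. Expanding in \<open>t\<close> and using the generating function of the Eulerian
  polynomials \<open>A_m\<close>, the coefficient of \<open>t^m\<close> is \<open>1/(n-1)!\<close> times the coefficient of \<open>x^(k-1)\<close> in
  \<open>R_{n,m+1}(x) A_m(x)\<close>, where \<open>R_{n,j}\<close> refines the Stirling numbers of the first kind. Both factors
  are palindromic with nonnegative coefficients among which the constant and the linear one are
  the smallest, and this property survives multiplication. As the product has degree
  \<open>n - 2 > k - 1\<close>, its coefficient of \<open>x\<close>, which belongs to \<open>k = 2\<close>, is at most that of \<open>x^(k-1)\<close>.\<close>

section \<open>Palindromic polynomials with minimal outer coefficients\<close>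

definition palindromic_min :: "real poly \<Rightarrow> nat \<Rightarrow> bool" where
  "palindromic_min p d \<longleftrightarrow> (\<forall>i>d. coeff p i = 0) \<and> (\<forall>i\<le>d. coeff p (d - i) = coeff p i)
     \<and> (\<forall>i. 0 \<le> coeff p i) \<and> (\<forall>i\<le>d. coeff p 0 \<le> coeff p i)
     \<and> (\<forall>i. 1 \<le> i \<and> i < d \<longrightarrow> coeff p 1 \<le> coeff p i)"

lemma palindromic_min_0: "palindromic_min 0 d"
  by (simp add: palindromic_min_def)

lemma palindromic_min_1: "palindromic_min 1 0"
  by (simp add: palindromic_min_def coeff_1)

lemma palindromic_min_add: "palindromic_min p d \<Longrightarrow> palindromic_min q d \<Longrightarrow> palindromic_min (p + q) d"
  unfolding palindromic_min_def by (auto intro: add_mono add_nonneg_nonneg)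

lemma palindromic_min_smult: "palindromic_min p d \<Longrightarrow> 0 \<le> c \<Longrightarrow> palindromic_min (smult c p) d"
  unfolding palindromic_min_def by (auto intro: mult_left_mono)

lemma palindromic_min_sum:
  "(\<And>x. x \<in> A \<Longrightarrow> palindromic_min (f x) d) \<Longrightarrow> palindromic_min (\<Sum>x\<in>A. f x) d"
  by (induction A rule: infinite_finite_induct) (simp_all add: palindromic_min_0 palindromic_min_add)

lemma sum_atMost_rev: "(\<Sum>j\<le>(a::nat). f j) = (\<Sum>j\<le>a. f (a - j))"
  by (rule sum.reindex_bij_witness[of _ "\<lambda>j. a - j" "\<lambda>j. a - j"]) auto

lemma coeff_mult_bounded_degrees:
  fixes p q :: "real poly"
  assumes "\<forall>i>a. coeff p i = 0" "\<forall>i>b. coeff q i = 0"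
  shows "coeff (p * q) k = (\<Sum>j\<le>a. \<Sum>l\<le>b. if j + l = k then coeff p j * coeff q l else 0)"
proof -
  have "degree p \<le> a" "degree q \<le> b"
    using assms by (auto intro: degree_le)
  then have "p * q = (\<Sum>j\<le>a. monom (coeff p j) j) * (\<Sum>l\<le>b. monom (coeff q l) l)"
    by (simp add: poly_as_sum_of_monoms')
  also have "\<dots> = (\<Sum>j\<le>a. \<Sum>l\<le>b. monom (coeff p j * coeff q l) (j + l))"
    by (simp add: sum_product mult_monom)
  finally show ?thesis by (simp add: coeff_sum coeff_monom)
qed

lemma coeff_mult_palindromic:
  fixes p q :: "real poly"
  assumes "\<forall>i>a. coeff p i = 0" "\<And>i. i \<le> a \<Longrightarrow> coeff p (a - i) = coeff p i"
    and "\<forall>i>b. coeff q i = 0" "\<And>i. i \<le> b \<Longrightarrow> coeff q (b - i) = coeff q i"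
    and "k \<le> a + b"
  shows "coeff (p * q) (a + b - k) = coeff (p * q) k"
proof -
  have "coeff (p * q) (a + b - k) = (\<Sum>j\<le>a. \<Sum>l\<le>b. if (a - j) + (b - l) = a + b - k
          then coeff p (a - j) * coeff q (b - l) else 0)"
    unfolding coeff_mult_bounded_degrees[OF assms(1,3)]
    by (subst sum_atMost_rev) (subst (2) sum_atMost_rev, rule refl)
  also have "\<dots> = (\<Sum>j\<le>a. \<Sum>l\<le>b. if j + l = k then coeff p j * coeff q l else 0)"
    by (intro sum.cong refl) (use assms in auto)
  finally show ?thesis
    by (simp add: coeff_mult_bounded_degrees[OF assms(1,3)])
qed

lemma coeff_mult_ge_two_terms:
  fixes p q :: "real poly"
  assumes "\<And>i. 0 \<le> coeff p i" "\<And>i. 0 \<le> coeff q i" "j1 \<le> k" "j2 \<le> k" "j1 \<noteq> j2"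
  shows "coeff p j1 * coeff q (k - j1) + coeff p j2 * coeff q (k - j2) \<le> coeff (p * q) k"
proof -
  have "(\<Sum>j\<in>{j1, j2}. coeff p j * coeff q (k - j)) \<le> (\<Sum>j\<le>k. coeff p j * coeff q (k - j))"
    by (rule sum_mono2) (use assms in auto)
  then show ?thesis
    using assms(5) by (simp add: coeff_mult)
qed

lemma palindromic_minD:
  assumes "palindromic_min p d"
  shows "\<forall>i>d. coeff p i = 0" "\<And>i. i \<le> d \<Longrightarrow> coeff p (d - i) = coeff p i"
    "\<And>i. 0 \<le> coeff p i" "\<And>i. i \<le> d \<Longrightarrow> coeff p 0 \<le> coeff p i"
    "\<And>i. 1 \<le> i \<Longrightarrow> i < d \<Longrightarrow> coeff p 1 \<le> coeff p i"
  using assms unfolding palindromic_min_def by auto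

lemma coeff_mult_1:
  "coeff (p * q) 1 = coeff p 0 * coeff q 1 + coeff p 1 * coeff (q :: real poly) 0"
  by (simp add: coeff_mult)

lemma coeff_mult_1_le_middle:
  assumes P: "palindromic_min p i" and Q: "palindromic_min q i" and "1 \<le> i"
  shows "coeff (p * q) 1 \<le> coeff (p * q) i"
proof -
  note p = palindromic_minD[OF P] and q = palindromic_minD[OF Q]
  consider "i = 1" | "i = 2" | "3 \<le> i"
    using assms(3) by linarith
  then show ?thesis
  proof cases
    case 2
    have "coeff (p * q) 2 = coeff p 0 * coeff q 2 + coeff p 1 * coeff q 1 + coeff p 2 * coeff q 0"
      by (simp add: coeff_mult numeral_2_eq_2)
    moreover have "coeff p 2 = coeff p 0" "coeff q 2 = coeff q 0"
      using p(2)[of 0] q(2)[of 0] 2 by simp_all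
    \<comment> \<open>\<open>p\<^sub>0q\<^sub>0 + p\<^sub>1q\<^sub>1 - (p\<^sub>0q\<^sub>1 + p\<^sub>1q\<^sub>0) = (p\<^sub>1 - p\<^sub>0)(q\<^sub>1 - q\<^sub>0)\<close>\<close>
    moreover have "0 \<le> (coeff p 1 - coeff p 0) * (coeff q 1 - coeff q 0)"
      using p(4)[of 1] q(4)[of 1] 2 by (auto intro!: mult_nonneg_nonneg)
    moreover have "0 \<le> coeff p 0 * coeff q 0"
      by (intro mult_nonneg_nonneg p(3) q(3))
    ultimately show ?thesis
      using 2 unfolding coeff_mult_1 by (simp add: algebra_simps)
  next
    case 3
    have "coeff q (i - 1) = coeff q 1"
      using q(2)[of 1] 3 by simp
    then have "coeff p 1 * coeff q 0 \<le> coeff p 1 * coeff q (i - 1)"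
      using q(4)[of 1] 3 p(3) by (auto intro: mult_left_mono)
    moreover have "coeff p 0 * coeff q 1 \<le> coeff p (i - 1) * coeff q (i - (i - 1))"
      using 3 by (auto intro!: mult_right_mono p(4) q(3))
    moreover have "coeff p 1 * coeff q (i - 1) + coeff p (i - 1) * coeff q (i - (i - 1))
        \<le> coeff (p * q) i"
      by (rule coeff_mult_ge_two_terms) (use 3 p(3) q(3) in auto)
    ultimately show ?thesis
      unfolding coeff_mult_1 by linarith
  qed simp
qed

text \<open>In the lower half of the product, the linear coefficient \<open>p\<^sub>0q\<^sub>1 + p\<^sub>1q\<^sub>0\<close> is dominated by
  two distinct summands of the \<open>i\<close>-th one.\<close>
lemma coeff_mult_1_le_lower_half:
  assumes P: "palindromic_min p a" and Q: "palindromic_min q b"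
    and i: "1 \<le> i" "i < a + b" "2 * i \<le> a + b"
  shows "coeff (p * q) 1 \<le> coeff (p * q) i"
proof -
  note p = palindromic_minD[OF P] and q = palindromic_minD[OF Q]
  note two_terms = coeff_mult_ge_two_terms[of p q, OF p(3) q(3)]
  consider "i < a" | "\<not> i < a" "i < b" | "a = i" "b = i"
    using i by linarith
  then show ?thesis
  proof cases
    case 1
    have "coeff p 0 * coeff q 1 \<le> coeff p (i - 1) * coeff q (i - (i - 1))"
      by (rule mult_mono) (use i 1 p q in auto)
    moreover have "coeff p 1 * coeff q 0 \<le> coeff p i * coeff q (i - i)"
      by (rule mult_mono) (use i 1 p q in auto)
    moreover have "coeff p (i - 1) * coeff q (i - (i - 1)) + coeff p i * coeff q (i - i)
        \<le> coeff (p * q) i"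
      by (rule two_terms) (use i in auto)
    ultimately show ?thesis
      unfolding coeff_mult_1 by linarith
  next
    case 2
    have "coeff p 0 * coeff q 1 \<le> coeff p 0 * coeff q (i - 0)"
      by (rule mult_mono) (use i 2 p q in auto)
    moreover have "coeff p 1 * coeff q 0 \<le> coeff p 1 * coeff q (i - 1)"
      by (rule mult_mono) (use i 2 p q in auto)
    moreover have "coeff p 0 * coeff q (i - 0) + coeff p 1 * coeff q (i - 1) \<le> coeff (p * q) i"
      by (rule two_terms) (use i in auto)
    ultimately show ?thesis
      unfolding coeff_mult_1 by linarith
  next
    case 3
    then show ?thesis
      using coeff_mult_1_le_middle P Q i(1) by simp
  qed
qed

lemma palindromic_min_mult:
  assumes P: "palindromic_min p a" and Q: "palindromic_min q b"
  shows "palindromic_min (p * q) (a + b)"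
proof -
  note p = palindromic_minD[OF P] and q = palindromic_minD[OF Q]
  have vanish: "\<forall>i>a + b. coeff (p * q) i = 0"
    unfolding coeff_mult_bounded_degrees[OF p(1) q(1)] by (auto intro!: sum.neutral)
  have sym: "\<And>i. i \<le> a + b \<Longrightarrow> coeff (p * q) (a + b - i) = coeff (p * q) i"
    by (rule coeff_mult_palindromic[OF p(1,2) q(1,2)])
  have nonneg: "\<And>i. 0 \<le> coeff (p * q) i"
    unfolding coeff_mult by (auto intro!: sum_nonneg mult_nonneg_nonneg p(3) q(3))
  have min0: "coeff (p * q) 0 \<le> coeff (p * q) i" if "i \<le> a + b" for i
  proof -
    have "coeff (p * q) 0 = coeff p 0 * coeff q 0"
      by (simp add: coeff_mult)
    also have "\<dots> \<le> coeff p (min i a) * coeff q (i - min i a)"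
      by (rule mult_mono) (use that p q in auto)
    also have "\<dots> \<le> coeff (p * q) i"
      unfolding coeff_mult by (rule member_le_sum) (use p(3) q(3) in auto)
    finally show ?thesis .
  qed
  have min1: "coeff (p * q) 1 \<le> coeff (p * q) i" if "1 \<le> i" "i < a + b" for i
  proof (cases "2 * i \<le> a + b")
    case True
    then show ?thesis
      using coeff_mult_1_le_lower_half[OF P Q] that by auto
  next
    case False
    then have "coeff (p * q) 1 \<le> coeff (p * q) (a + b - i)"
      using coeff_mult_1_le_lower_half[OF P Q] that by auto
    also have "\<dots> = coeff (p * q) i"
      using sym that by auto
    finally show ?thesis .
  qed
  show ?thesis
    unfolding palindromic_min_def using vanish sym nonneg min0 min1 by auto
qed

section \<open>Stirling-type and Eulerian polynomials\<close>

definition geom_poly :: "nat \<Rightarrow> real poly" where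
  "geom_poly a = (\<Sum>i<a. monom 1 i)"

lemma coeff_geom_poly: "coeff (geom_poly a) i = (if i < a then 1 else 0)"
  by (simp add: geom_poly_def coeff_sum)

lemma poly_geom_poly: "poly (geom_poly a) x = (\<Sum>i<a. x ^ i)"
  by (simp add: geom_poly_def poly_sum poly_monom)

lemma palindromic_min_geom_poly: "palindromic_min (geom_poly (Suc a)) a"
  unfolding palindromic_min_def coeff_geom_poly by auto

text \<open>An \<open>x\<close>-refinement of the unsigned Stirling numbers of the first kind, which are recovered
  at \<open>x = 0\<close>: the new element lies in a cycle with \<open>a\<close> further ones, weighted by \<open>1 + x + \<dots> + x\<^sup>a\<close>.\<close>
fun stirling1_poly :: "nat \<Rightarrow> nat \<Rightarrow> real poly" where
  "stirling1_poly 0 j = (if j = 0 then 1 else 0)"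
| "stirling1_poly (Suc n) 0 = 0"
| "stirling1_poly (Suc n) (Suc j) =
     (\<Sum>a<Suc n. smult (fact n / fact (n - a)) (geom_poly (Suc a) * stirling1_poly (n - a) j))"

lemma stirling1_poly_eq_0: "n < j \<Longrightarrow> stirling1_poly n j = 0"
  by (induction n j rule: stirling1_poly.induct) auto

lemma palindromic_min_stirling1_poly: "palindromic_min (stirling1_poly n j) (n - j)"
proof (induction n j rule: stirling1_poly.induct)
  case (3 n j)
  have "palindromic_min (smult (fact n / fact (n - a))
      (geom_poly (Suc a) * stirling1_poly (n - a) j)) (n - j)" if "a < Suc n" for a
  proof (cases "j \<le> n - a")
    case True
    have "palindromic_min (stirling1_poly (n - a) j) (n - a - j)"
      using 3 that by simp
    then have "palindromic_min (geom_poly (Suc a) * stirling1_poly (n - a) j) (a + (n - a - j))"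
      by (rule palindromic_min_mult[OF palindromic_min_geom_poly])
    moreover have "a + (n - a - j) = n - j"
      using True that by auto
    ultimately show ?thesis
      by (intro palindromic_min_smult) auto
  qed (simp add: stirling1_poly_eq_0 palindromic_min_0)
  then show ?case
    unfolding stirling1_poly.simps diff_Suc_Suc by (intro palindromic_min_sum) simp
qed (simp_all add: palindromic_min_0 palindromic_min_1)

fun eulerian :: "nat \<Rightarrow> nat \<Rightarrow> nat" where
  "eulerian 0 j = (if j = 0 then 1 else 0)"
| "eulerian (Suc m) j = Suc j * eulerian m j + (if j = 0 then 0 else (Suc m - j) * eulerian m (j - 1))"

lemma eulerian_eq_0: "0 < j \<Longrightarrow> m \<le> j \<Longrightarrow> eulerian m j = 0"
  by (induction m arbitrary: j) auto

lemma eulerian_0: "eulerian m 0 = 1"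
  by (induction m) auto

lemma eulerian_pos: "j < m \<Longrightarrow> 1 \<le> eulerian m j"
proof (induction m arbitrary: j)
  case (Suc m)
  show ?case
  proof (cases "j < m")
    case True
    then show ?thesis using Suc by (simp add: le_add1 trans_le_add1)
  next
    case False
    then have "j = m" using Suc by auto
    then show ?thesis
      using Suc.IH[of "j - 1"] by (cases "m = 0") auto
  qed
qed simp

lemma eulerian_sym: "j < m \<Longrightarrow> eulerian m (m - 1 - j) = eulerian m j"
proof (induction m arbitrary: j)
  case (Suc m)
  have top: "eulerian (Suc m) m = 1"
    using Suc.IH[of 0] by (cases "m = 0") (simp_all add: eulerian_eq_0 eulerian_0)
  consider "j = 0" | "j = m" | "0 < j" "j < m"
    using Suc.prems by linarith
  then show ?case
  proof cases
    case 3
    have "eulerian m (m - j) = eulerian m (j - 1)"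
      using Suc.IH[of "j - 1"] 3 by (simp add: Suc_diff_Suc)
    moreover have "eulerian m (m - 1 - j) = eulerian m j"
      using Suc.IH[of j] 3 by simp
    ultimately show ?thesis
      using 3 by (simp add: Suc_diff_le Suc_diff_Suc)
  qed (use top in \<open>simp_all add: eulerian_0\<close>)
qed simp

lemma eulerian_1_le: "1 \<le> j \<Longrightarrow> j + 1 < m \<Longrightarrow> eulerian m 1 \<le> eulerian m j"
proof (induction m arbitrary: j)
  case (Suc m)
  have e1: "eulerian (Suc m) 1 = 2 * eulerian m 1 + m"
    by (simp add: eulerian_0)
  consider "j = 1" | "j \<noteq> 1" "j + 1 < m" | "j = m - 1" "2 \<le> j"
    using Suc.prems by linarith
  then show ?case
  proof cases
    case 2
    have "eulerian m 1 \<le> eulerian m j" "eulerian m 1 \<le> eulerian m (j - 1)"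
      using Suc.IH[of j] Suc.IH[of "j - 1"] 2 Suc.prems by auto
    then have "Suc j * eulerian m 1 + (Suc m - j) * eulerian m 1
        \<le> Suc j * eulerian m j + (Suc m - j) * eulerian m (j - 1)"
      by (intro add_mono mult_le_mono2)
    moreover have "Suc j * eulerian m 1 + (Suc m - j) * eulerian m 1 = (m + 2) * eulerian m 1"
      using 2 add_mult_distrib[of "Suc j" "Suc m - j" "eulerian m 1"] by simp
    moreover have "(m + 2) * eulerian m 1 = 2 * eulerian m 1 + m * eulerian m 1"
      by (simp add: algebra_simps)
    moreover have "m \<le> m * eulerian m 1"
      using eulerian_pos[of 1 m] 2 by simp
    moreover have "eulerian (Suc m) j = Suc j * eulerian m j + (Suc m - j) * eulerian m (j - 1)"
      using Suc.prems by simp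
    ultimately show ?thesis
      using e1 by linarith
  next
    case 3
    have top: "eulerian m (m - 1) = 1"
      using eulerian_sym[of 0 m] 3 by (simp add: eulerian_0)
    have next_top: "eulerian m (m - 2) = eulerian m 1"
      using eulerian_sym[of 1 m] 3 by (simp add: numeral_2_eq_2)
    have "eulerian (Suc m) j = m * eulerian m (m - 1) + 2 * eulerian m (m - 2)"
      using 3 by (simp add: numeral_2_eq_2 Suc_diff_Suc)
    then have "eulerian (Suc m) j = m + 2 * eulerian m 1"
      unfolding top next_top by simp
    then show ?thesis
      using e1 by linarith
  qed simp
qed simp

definition eulerian_poly :: "nat \<Rightarrow> real poly" where
  "eulerian_poly m = (\<Sum>j\<le>m. monom (real (eulerian m j)) j)"

lemma coeff_eulerian_poly: "coeff (eulerian_poly m) i = real (eulerian m i)"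
  by (cases "i \<le> m") (auto simp: eulerian_poly_def coeff_sum eulerian_eq_0)

lemma palindromic_min_eulerian_poly: "palindromic_min (eulerian_poly m) (m - 1)"
  unfolding palindromic_min_def coeff_eulerian_poly
proof (intro conjI allI impI)
  fix i
  show "i > m - 1 \<Longrightarrow> real (eulerian m i) = 0"
    by (cases "m = 0") (auto simp: eulerian_eq_0)
  show "i \<le> m - 1 \<Longrightarrow> real (eulerian m (m - 1 - i)) = real (eulerian m i)"
    using eulerian_sym[of i m] by (cases "m = 0") auto
  show "i \<le> m - 1 \<Longrightarrow> real (eulerian m 0) \<le> real (eulerian m i)"
    using eulerian_pos[of i m] by (cases "i = 0") (auto simp: eulerian_0)
  show "1 \<le> i \<and> i < m - 1 \<Longrightarrow> real (eulerian m 1) \<le> real (eulerian m i)"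
    using eulerian_1_le[of i m] by auto
qed auto

section \<open>Generating functions\<close>

lemma fps_one_minus_cX_mult_nth:
  "fps_nth ((1 - fps_const c * fps_X) * (F :: real fps)) n
     = fps_nth F n - (if n = 0 then 0 else c * fps_nth F (n - 1))"
proof -
  have "(1 - fps_const c * fps_X) * F = F - fps_const c * (fps_X * F)"
    by (simp add: algebra_simps)
  then show ?thesis by (simp add: fps_X_mult_nth)
qed

lemma fps_one_minus_X_mult_nth:
  "fps_nth ((1 - fps_X) * (F :: real fps)) n = fps_nth F n - (if n = 0 then 0 else fps_nth F (n - 1))"
  using fps_one_minus_cX_mult_nth[of 1 F n] by simp

definition powers_fps :: "nat \<Rightarrow> real fps" where
  "powers_fps m = Abs_fps (\<lambda>i. real (i + 1) ^ m)"

lemma powers_fps_Suc: "powers_fps (Suc m) = fps_deriv (fps_X * powers_fps m)"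
  by (rule fps_ext) (simp add: powers_fps_def fps_deriv_nth fps_X_mult_nth algebra_simps)

lemma fps_eulerian_poly_Suc:
  "fps_of_poly (eulerian_poly (Suc m)) = (1 + of_nat m * fps_X) * fps_of_poly (eulerian_poly m)
     + fps_X * (1 - fps_X) * fps_deriv (fps_of_poly (eulerian_poly m))"
proof (rule fps_ext)
  fix n
  define F where "F = fps_of_poly (eulerian_poly m)"
  have F: "fps_nth F i = real (eulerian m i)" for i
    by (simp add: F_def coeff_eulerian_poly)
  have "(1 + of_nat m * fps_X) * F + fps_X * (1 - fps_X) * fps_deriv F
      = F + of_nat m * (fps_X * F) + (1 - fps_X) * (fps_X * fps_deriv F)"
    by (simp add: algebra_simps)
  then have "fps_nth ((1 + of_nat m * fps_X) * F + fps_X * (1 - fps_X) * fps_deriv F) n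
      = fps_nth F n + (if n = 0 then 0 else of_nat m * fps_nth F (n - 1))
        + (of_nat n * fps_nth F n - (if n = 0 then 0 else of_nat (n - 1) * fps_nth F (n - 1)))"
    by (simp add: fps_X_mult_nth fps_mult_of_nat_nth fps_one_minus_X_mult_nth
        fps_mult_fps_X_deriv_shift)
  also have "\<dots> = real (eulerian (Suc m) n)"
  proof (cases "n = 0 \<or> Suc m < n")
    case True
    then show ?thesis by (auto simp: F eulerian_eq_0)
  next
    case False
    then have "eulerian (Suc m) n = Suc n * eulerian m n + (Suc m - n) * eulerian m (n - 1)"
      by simp
    then have "real (eulerian (Suc m) n)
        = real (Suc n) * fps_nth F n + real (Suc m - n) * fps_nth F (n - 1)"
      by (simp only: F of_nat_add of_nat_mult)
    moreover have "real (Suc m - n) = real m + 1 - real n" "real (n - 1) = real n - 1"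
      using False by (simp_all add: of_nat_diff)
    ultimately show ?thesis
      using False by (simp add: algebra_simps)
  qed
  finally show "fps_nth (fps_of_poly (eulerian_poly (Suc m))) n = fps_nth ((1 + of_nat m * fps_X)
      * fps_of_poly (eulerian_poly m) + fps_X * (1 - fps_X) * fps_deriv (fps_of_poly (eulerian_poly m))) n"
    by (simp add: F_def coeff_eulerian_poly)
qed

lemma powers_fps_eulerian: "(1 - fps_X) ^ Suc m * powers_fps m = fps_of_poly (eulerian_poly m)"
proof (induction m)
  case 0
  have "(1 - fps_X) * powers_fps 0 = (1 :: real fps)"
    by (rule fps_ext) (simp add: fps_one_minus_X_mult_nth powers_fps_def)
  then show ?case by (simp add: eulerian_poly_def)
next
  case (Suc m)
  define U :: "real fps" where "U = 1 - fps_X"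
  define S where "S = powers_fps m"
  have IH: "U ^ Suc m * S = fps_of_poly (eulerian_poly m)"
    using Suc by (simp add: U_def S_def)
  have "fps_deriv (U ^ Suc m) = of_nat (Suc m) * fps_deriv U * U ^ m"
    by (simp only: fps_deriv_power' diff_Suc_1)
  moreover have "fps_deriv U = -1"
    by (simp add: U_def)
  ultimately have dP: "fps_deriv (U ^ Suc m) = - (of_nat (Suc m) * U ^ m)"
    by (simp only:) (simp add: algebra_simps)
  have dE: "fps_deriv (fps_of_poly (eulerian_poly m))
      = U ^ Suc m * fps_deriv S - of_nat (Suc m) * U ^ m * S"
    unfolding IH[symmetric] fps_deriv_mult dP by (simp add: algebra_simps)
  have ring: "u * (u * w) * (x * d + s) = (1 + c * x) * (u * w * s) + x * u * (u * w * d - (c + 1) * w * s)"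
    if "u = 1 - x" for u x w d s c :: "real fps"
    unfolding that by (simp add: algebra_simps)
  have "(1 - fps_X) ^ Suc (Suc m) * powers_fps (Suc m) = U ^ Suc (Suc m) * (fps_X * fps_deriv S + S)"
    by (simp add: powers_fps_Suc U_def S_def fps_deriv_mult algebra_simps)
  also have "\<dots> = (1 + of_nat m * fps_X) * (U ^ Suc m * S)
      + fps_X * U * (U ^ Suc m * fps_deriv S - of_nat (Suc m) * U ^ m * S)"
    using ring[OF U_def, of "U ^ m" "fps_deriv S" S "of_nat m"] by (simp add: power_Suc)
  also have "\<dots> = fps_of_poly (eulerian_poly (Suc m))"
    unfolding fps_eulerian_poly_Suc dE unfolding IH[symmetric] U_def[symmetric] by (rule refl)
  finally show ?case .
qed

text \<open>The bivariate generating function \<open>\<Sum>\<^sub>n \<Sum>\<^sub>j stirling1_poly n j (x) Y\<^sup>j z\<^sup>n / n!\<close> equals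
  \<open>((1 - x z) / (1 - z))\<^bsup>Y/(1-x)\<^esup>\<close>: both sides solve \<open>(1 - z)(1 - x z) F' = Y F\<close> with \<open>F(0) = 1\<close>,
  the left one because the recursion of \<open>stirling1_poly\<close> is a convolution with
  \<open>\<Sum>\<^sub>a geom_poly (a + 1) (x) z\<^sup>a = 1 / ((1 - z)(1 - x z))\<close>.\<close>

definition stirling1_row :: "real \<Rightarrow> real \<Rightarrow> nat \<Rightarrow> real" where
  "stirling1_row x Y n = (\<Sum>j\<le>n. Y ^ j * poly (stirling1_poly n j) x)"

lemma stirling1_row_extend:
  "m \<le> n \<Longrightarrow> (\<Sum>j\<le>n. Y ^ j * poly (stirling1_poly m j) x) = stirling1_row x Y m"
  unfolding stirling1_row_def by (rule sum.mono_neutral_right) (auto simp: stirling1_poly_eq_0)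

lemma stirling1_row_Suc: "stirling1_row x Y (Suc n) =
   (\<Sum>a\<le>n. (fact n / fact (n - a)) * Y * poly (geom_poly (Suc a)) x * stirling1_row x Y (n - a))"
proof -
  have "stirling1_row x Y (Suc n) = (\<Sum>j\<le>n. Y ^ Suc j * poly (stirling1_poly (Suc n) (Suc j)) x)"
    unfolding stirling1_row_def by (subst sum.atMost_Suc_shift) simp
  also have "\<dots> = (\<Sum>j\<le>n. \<Sum>a\<le>n. Y ^ Suc j * ((fact n / fact (n - a))
      * (poly (geom_poly (Suc a)) x * poly (stirling1_poly (n - a) j) x)))"
    by (simp add: poly_sum sum_distrib_left lessThan_Suc_atMost)
  also have "\<dots> = (\<Sum>a\<le>n. \<Sum>j\<le>n. Y ^ Suc j * ((fact n / fact (n - a))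
      * (poly (geom_poly (Suc a)) x * poly (stirling1_poly (n - a) j) x)))"
    by (rule sum.swap)
  also have "\<dots> = (\<Sum>a\<le>n. (fact n / fact (n - a)) * Y * poly (geom_poly (Suc a)) x
      * (\<Sum>j\<le>n. Y ^ j * poly (stirling1_poly (n - a) j) x))"
    by (simp add: sum_distrib_left sum_divide_distrib algebra_simps)
  also have "\<dots> = (\<Sum>a\<le>n. (fact n / fact (n - a)) * Y * poly (geom_poly (Suc a)) x
      * stirling1_row x Y (n - a))"
    by (simp add: stirling1_row_extend)
  finally show ?thesis .
qed

definition denom_fps :: "real \<Rightarrow> real fps" where
  "denom_fps x = (1 - fps_X) * (1 - fps_const x * fps_X)"

definition geom_fps :: "real \<Rightarrow> real fps" where
  "geom_fps x = Abs_fps (\<lambda>a. poly (geom_poly (Suc a)) x)"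

lemma denom_fps_mult_geom_fps: "denom_fps x * geom_fps x = 1"
proof -
  have "(1 - fps_X) * geom_fps x = Abs_fps (\<lambda>a. x ^ a)"
  proof (rule fps_ext)
    fix n
    show "fps_nth ((1 - fps_X) * geom_fps x) n = fps_nth (Abs_fps (\<lambda>a. x ^ a)) n"
      by (cases n) (simp_all add: fps_one_minus_X_mult_nth geom_fps_def poly_geom_poly)
  qed
  moreover have "(1 - fps_const x * fps_X) * Abs_fps (\<lambda>a. x ^ a) = 1"
    by (rule fps_ext) (auto simp: fps_one_minus_cX_mult_nth power_eq_if)
  moreover have "denom_fps x * geom_fps x
      = (1 - fps_const x * fps_X) * ((1 - fps_X) * geom_fps x)"
    by (simp add: denom_fps_def algebra_simps)
  ultimately show ?thesis
    by simp
qed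

lemma denom_fps_mult_nth:
  assumes "\<And>k. k < n \<Longrightarrow> fps_nth F k = 0"
  shows "fps_nth (denom_fps x * F) n = fps_nth F n"
proof -
  have eq: "denom_fps x * F = (1 - fps_X) * ((1 - fps_const x * fps_X) * F)"
    by (simp add: denom_fps_def mult.assoc)
  show ?thesis
    unfolding eq using assms by (simp add: fps_one_minus_X_mult_nth fps_one_minus_cX_mult_nth)
qed

lemma denom_fps_ode_unique:
  assumes "fps_nth F 0 = fps_nth G 0"
    and "denom_fps x * fps_deriv F = fps_const c * F"
    and "denom_fps x * fps_deriv G = fps_const c * G"
  shows "F = G"
proof -
  define H where "H = F - G"
  have H0: "fps_nth H 0 = 0"
    using assms(1) by (simp add: H_def)
  have HD: "denom_fps x * fps_deriv H = fps_const c * H"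
    using assms(2,3) by (simp add: H_def algebra_simps)
  have "fps_nth H n = 0" for n
  proof (induction n rule: less_induct)
    case (less n)
    show ?case
    proof (cases n)
      case (Suc n')
      have "fps_nth (fps_deriv H) k = 0" if "k < n'" for k
        using less.IH[of "Suc k"] that Suc by (simp add: fps_deriv_nth)
      then have "fps_nth (denom_fps x * fps_deriv H) n' = fps_nth (fps_deriv H) n'"
        by (intro denom_fps_mult_nth)
      moreover have "fps_nth (fps_const c * H) n' = 0"
        using less.IH[of n'] Suc by simp
      ultimately have "fps_nth (fps_deriv H) n' = 0"
        using HD by simp
      then show ?thesis
        using Suc by (simp add: fps_deriv_nth)
    qed (use H0 in simp)
  qed
  then show ?thesis
    unfolding H_def by (intro fps_ext) simp
qed

definition stirling1_egf :: "real \<Rightarrow> real \<Rightarrow> real fps" where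
  "stirling1_egf x Y = Abs_fps (\<lambda>n. stirling1_row x Y n / fact n)"

lemma stirling1_egf_ode: "denom_fps x * fps_deriv (stirling1_egf x Y) = fps_const Y * stirling1_egf x Y"
proof -
  have "fps_deriv (stirling1_egf x Y) = fps_const Y * geom_fps x * stirling1_egf x Y"
  proof (rule fps_ext)
    fix n
    have "fps_nth (fps_deriv (stirling1_egf x Y)) n = stirling1_row x Y (Suc n) / fact n"
      by (simp add: stirling1_egf_def fps_deriv_nth field_simps del: of_nat_Suc)
    also have "\<dots> = (\<Sum>a\<le>n. Y * poly (geom_poly (Suc a)) x * (stirling1_row x Y (n - a) / fact (n - a)))"
      unfolding stirling1_row_Suc by (simp add: sum_divide_distrib field_simps)
    also have "\<dots> = Y * fps_nth (geom_fps x * stirling1_egf x Y) n"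
      by (simp add: fps_mult_nth geom_fps_def stirling1_egf_def atLeast0AtMost
          sum_distrib_left mult.assoc)
    also have "\<dots> = fps_nth (fps_const Y * geom_fps x * stirling1_egf x Y) n"
      by (simp add: mult.assoc)
    finally show "fps_nth (fps_deriv (stirling1_egf x Y)) n
        = fps_nth (fps_const Y * geom_fps x * stirling1_egf x Y) n" .
  qed
  then have "denom_fps x * fps_deriv (stirling1_egf x Y)
      = fps_const Y * (denom_fps x * geom_fps x) * stirling1_egf x Y"
    by (simp add: algebra_simps)
  then show ?thesis
    by (simp add: denom_fps_mult_geom_fps)
qed

definition binom_fps :: "real \<Rightarrow> real \<Rightarrow> real fps" where
  "binom_fps x y = Abs_fps (\<lambda>j. (y gchoose j) * (- x) ^ j)"

definition neg_binom_fps :: "real \<Rightarrow> real fps" where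
  "neg_binom_fps y = Abs_fps (\<lambda>i. (y + of_nat i - 1) gchoose i)"

lemma binom_fps_ode:
  "(1 - fps_const x * fps_X) * fps_deriv (binom_fps x y) = - fps_const (x * y) * binom_fps x y"
proof (rule fps_ext)
  fix n
  have g: "of_nat (Suc n) * (y gchoose Suc n) = (y - of_nat n) * (y gchoose n)" for n
    using gbinomial_mult_1[of y n] by (simp add: algebra_simps)
  show "fps_nth ((1 - fps_const x * fps_X) * fps_deriv (binom_fps x y)) n
      = fps_nth (- fps_const (x * y) * binom_fps x y) n"
  proof (cases n)
    case 0
    then show ?thesis
      using g[of 0] by (simp add: fps_one_minus_cX_mult_nth binom_fps_def fps_deriv_nth)
  next
    case (Suc k)
    have "fps_nth ((1 - fps_const x * fps_X) * fps_deriv (binom_fps x y)) n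
        = of_nat (Suc n) * (y gchoose Suc n) * (- x) ^ Suc n - x * (of_nat n * (y gchoose n) * (- x) ^ n)"
      using Suc by (simp add: fps_one_minus_cX_mult_nth binom_fps_def fps_deriv_nth del: of_nat_Suc)
    also have "\<dots> = - (x * y) * ((y gchoose n) * (- x) ^ n)"
      unfolding g by (simp add: algebra_simps)
    finally show ?thesis
      by (simp add: binom_fps_def)
  qed
qed

lemma neg_binom_fps_ode: "(1 - fps_X) * fps_deriv (neg_binom_fps y) = fps_const y * neg_binom_fps y"
proof (rule fps_ext)
  fix n
  have g: "of_nat (Suc n) * ((y + of_nat (Suc n) - 1) gchoose Suc n)
      = (y + of_nat n) * ((y + of_nat n - 1) gchoose n)" for n
    using gbinomial_absorption[where k=n and a="y + of_nat n"] by simp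
  show "fps_nth ((1 - fps_X) * fps_deriv (neg_binom_fps y)) n = fps_nth (fps_const y * neg_binom_fps y) n"
  proof (cases n)
    case 0
    then show ?thesis
      using g[of 0] by (simp add: fps_one_minus_X_mult_nth neg_binom_fps_def fps_deriv_nth)
  next
    case (Suc k)
    have "fps_nth ((1 - fps_X) * fps_deriv (neg_binom_fps y)) n
        = of_nat (Suc n) * ((y + of_nat (Suc n) - 1) gchoose Suc n)
          - of_nat n * ((y + of_nat n - 1) gchoose n)"
      using Suc by (simp add: fps_one_minus_X_mult_nth neg_binom_fps_def fps_deriv_nth del: of_nat_Suc)
    also have "\<dots> = y * ((y + of_nat n - 1) gchoose n)"
      unfolding g by (simp add: algebra_simps)
    finally show ?thesis
      by (simp add: neg_binom_fps_def)
  qed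
qed

lemma binom_neg_binom_fps_ode:
  "denom_fps x * fps_deriv (binom_fps x y * neg_binom_fps y)
     = fps_const (y * (1 - x)) * (binom_fps x y * neg_binom_fps y)"
proof -
  have product_rule: "(1 - X) * (1 - c * X) * (A * B' + A' * B) = y * (1 - c) * (A * B)"
    if "(1 - c * X) * A' = - (c * y) * A" "(1 - X) * B' = y * B" for X c y A A' B B' :: "real fps"
  proof -
    have "(1 - X) * (1 - c * X) * (A * B' + A' * B)
        = (1 - X) * B * ((1 - c * X) * A') + (1 - c * X) * A * ((1 - X) * B')"
      by (simp add: algebra_simps)
    also have "\<dots> = y * (1 - c) * (A * B)"
      unfolding that by (simp add: algebra_simps)
    finally show ?thesis .
  qed
  have "denom_fps x * fps_deriv (binom_fps x y * neg_binom_fps y)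
      = fps_const y * (1 - fps_const x) * (binom_fps x y * neg_binom_fps y)"
    unfolding denom_fps_def fps_deriv_mult
    by (rule product_rule) (simp_all add: binom_fps_ode neg_binom_fps_ode)
  then show ?thesis
    by (simp add: algebra_simps)
qed

lemma stirling1_row_gbinomial:
  "stirling1_row x (y * (1 - x)) n / fact n
     = (\<Sum>j\<le>n. ((y gchoose j) * (- x) ^ j) * ((y + of_nat (n - j) - 1) gchoose (n - j)))"
proof -
  have "stirling1_egf x (y * (1 - x)) = binom_fps x y * neg_binom_fps y"
    by (rule denom_fps_ode_unique[OF _ stirling1_egf_ode binom_neg_binom_fps_ode])
       (simp add: stirling1_egf_def stirling1_row_def binom_fps_def neg_binom_fps_def)
  then have "fps_nth (stirling1_egf x (y * (1 - x))) n = fps_nth (binom_fps x y * neg_binom_fps y) n"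
    by simp
  then show ?thesis
    by (simp add: stirling1_egf_def fps_mult_nth binom_fps_def neg_binom_fps_def atLeast0AtMost)
qed

section \<open>The coefficient formula\<close>

lemma poly_pochhammer: "poly (pochhammer p k) y = pochhammer (poly p y) k"
  by (induction k) (simp_all add: pochhammer_Suc)

lemma pochhammer_shift_mult:
  fixes y :: real
  assumes "0 < j + r"
  shows "pochhammer (y - of_nat j + 1) j * pochhammer y r = y * pochhammer (y - of_nat j + 1) (j + r - 1)"
proof (cases j)
  case 0
  then obtain r' where "r = Suc r'"
    using assms by (cases r) auto
  then show ?thesis
    using 0 by (simp add: pochhammer_rec)
next
  case (Suc j')
  have z: "y - of_nat j + 1 + of_nat j' = y"
    using Suc by simp
  have "pochhammer (y - of_nat j + 1) j = pochhammer (y - of_nat j + 1) j' * y"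
    using Suc z by (simp only: pochhammer_Suc)
  moreover have "pochhammer (y - of_nat j + 1) (j' + r)
      = pochhammer (y - of_nat j + 1) j' * pochhammer y r"
    using pochhammer_product'[of "y - of_nat j + 1" j' r] z by simp
  ultimately show ?thesis
    using Suc by (simp add: algebra_simps)
qed

definition rising_poly :: "nat \<Rightarrow> nat \<Rightarrow> real poly" where
  "rising_poly N j = pochhammer [:1 - real j, 1:] (N - 1)"

lemma poly_rising_poly: "poly (rising_poly N j) y = pochhammer (y - real j + 1) (N - 1)"
  by (simp add: rising_poly_def poly_pochhammer algebra_simps)

lemma fact_mult_gbinomial_product:
  assumes "j \<le> N" "1 \<le> N"
  shows "fact N * (((y::real) gchoose j) * ((y + of_nat (N - j) - 1) gchoose (N - j)))
    = real (N choose j) * (y * poly (rising_poly N j) y)"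
proof -
  have "fact N = real (N choose j) * fact j * fact (N - j)"
    using binomial_fact[OF assms(1), where 'a=real] by (simp add: field_simps)
  then have "fact N * ((y gchoose j) * ((y + of_nat (N - j) - 1) gchoose (N - j)))
      = real (N choose j) * ((fact j * (y gchoose j))
        * (fact (N - j) * ((y + of_nat (N - j) - 1) gchoose (N - j))))"
    by (simp add: mult_ac)
  also have "\<dots> = real (N choose j) * (pochhammer (y - of_nat j + 1) j * pochhammer y (N - j))"
    by (simp add: gbinomial_pochhammer')
  also have "\<dots> = real (N choose j) * (y * poly (rising_poly N j) y)"
    using pochhammer_shift_mult[of j "N - j" y] assms by (simp add: poly_rising_poly)
  finally show ?thesis .
qed

lemma stirling1_row_rising_poly:
  assumes "1 \<le> N"
  shows "stirling1_row x (y * (1 - x)) N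
    = (\<Sum>j\<le>N. real (N choose j) * (- x) ^ j * (y * poly (rising_poly N j) y))"
proof -
  have "stirling1_row x (y * (1 - x)) N = fact N * (stirling1_row x (y * (1 - x)) N / fact N)"
    by simp
  also have "\<dots> = (\<Sum>j\<le>N. (- x) ^ j
      * (fact N * ((y gchoose j) * ((y + of_nat (N - j) - 1) gchoose (N - j)))))"
    unfolding stirling1_row_gbinomial by (simp add: sum_distrib_left mult_ac)
  also have "\<dots> = (\<Sum>j\<le>N. real (N choose j) * (- x) ^ j * (y * poly (rising_poly N j) y))"
  proof (intro sum.cong refl)
    fix j
    assume "j \<in> {..N}"
    then show "(- x) ^ j * (fact N * ((y gchoose j) * ((y + of_nat (N - j) - 1) gchoose (N - j))))
        = real (N choose j) * (- x) ^ j * (y * poly (rising_poly N j) y)"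
      using fact_mult_gbinomial_product[OF _ assms, of j y] by simp
  qed
  finally show ?thesis .
qed

definition rising_coeff_poly :: "nat \<Rightarrow> nat \<Rightarrow> real poly" where
  "rising_coeff_poly N m = (\<Sum>j\<le>N. monom ((- 1) ^ j * real (N choose j) * coeff (rising_poly N j) m) j)"

text \<open>Comparing the coefficients of \<open>y\<^sup>m\<^sup>+\<^sup>1\<close> in \<open>stirling1_row_rising_poly\<close>.\<close>
lemma rising_coeff_poly_eq:
  assumes "1 \<le> N"
  shows "rising_coeff_poly N m = [:1, -1:] ^ Suc m * stirling1_poly N (Suc m)"
proof -
  have "poly (rising_coeff_poly N m) x = poly ([:1, -1:] ^ Suc m * stirling1_poly N (Suc m)) x" for x
  proof -
    define L where "L = (\<Sum>j\<le>N. monom ((1 - x) ^ j * poly (stirling1_poly N j) x) j)"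
    define R where "R = pCons 0 (\<Sum>j\<le>N. smult (real (N choose j) * (- x) ^ j) (rising_poly N j))"
    have "poly L y = poly R y" for y
    proof -
      have "poly L y = stirling1_row x (y * (1 - x)) N"
        unfolding L_def stirling1_row_def poly_sum poly_monom power_mult_distrib by (simp add: mult_ac)
      also have "\<dots> = poly R y"
        unfolding stirling1_row_rising_poly[OF assms]
        by (simp add: R_def poly_sum sum_distrib_left algebra_simps)
      finally show ?thesis .
    qed
    then have "poly L = poly R"
      by (rule ext)
    then have "L = R"
      by (simp only: poly_eq_poly_eq_iff)
    then have "coeff L (Suc m) = coeff R (Suc m)"
      by simp
    moreover have "coeff L (Suc m) = (1 - x) ^ Suc m * poly (stirling1_poly N (Suc m)) x"
      by (simp add: L_def coeff_sum stirling1_poly_eq_0)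
    moreover have "coeff R (Suc m) = (\<Sum>j\<le>N. real (N choose j) * (- x) ^ j * coeff (rising_poly N j) m)"
      by (simp add: R_def coeff_sum)
    moreover have "poly (rising_coeff_poly N m) x
        = (\<Sum>j\<le>N. real (N choose j) * (- x) ^ j * coeff (rising_poly N j) m)"
      by (simp add: rising_coeff_poly_def poly_sum poly_monom power_minus[of x] mult_ac)
    moreover have "poly ([:1, -1:] ^ Suc m * stirling1_poly N (Suc m)) x
        = (1 - x) ^ Suc m * poly (stirling1_poly N (Suc m)) x"
      by (simp only: poly_mult poly_power) simp
    ultimately show ?thesis
      by simp
  qed
  then have "poly (rising_coeff_poly N m) = poly ([:1, -1:] ^ Suc m * stirling1_poly N (Suc m))"
    by (rule ext)
  then show ?thesis
    by (simp only: poly_eq_poly_eq_iff)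
qed

lemma fps_of_poly_one_minus_X: "fps_of_poly [:1, -1:] = (1 - fps_X :: real fps)"
  by (rule fps_ext) (simp add: coeff_pCons split: nat.split)

lemma alternating_sum_eq_coeff_stirling1_eulerian:
  assumes "1 \<le> N" "1 \<le> k"
  shows "(\<Sum>j<k. (- 1) ^ j * real (N choose j) * real (k - j) ^ m * coeff (rising_poly N j) m)
       = coeff (stirling1_poly N (Suc m) * eulerian_poly m) (k - 1)"
proof -
  have "fps_of_poly (rising_coeff_poly N m) * powers_fps m
      = fps_of_poly (stirling1_poly N (Suc m)) * ((1 - fps_X) ^ Suc m * powers_fps m)"
    unfolding rising_coeff_poly_eq[OF assms(1)]
    by (simp only: fps_of_poly_mult fps_of_poly_power fps_of_poly_one_minus_X mult_ac)
  also have "\<dots> = fps_of_poly (stirling1_poly N (Suc m) * eulerian_poly m)"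
    by (simp only: powers_fps_eulerian fps_of_poly_mult)
  finally have "coeff (stirling1_poly N (Suc m) * eulerian_poly m) (k - 1)
      = fps_nth (fps_of_poly (rising_coeff_poly N m) * powers_fps m) (k - 1)"
    by simp
  also have "\<dots> = (\<Sum>i = 0..k - 1. coeff (rising_coeff_poly N m) i * real (k - 1 - i + 1) ^ m)"
    by (simp add: fps_mult_nth powers_fps_def)
  also have "\<dots> = (\<Sum>j<k. (- 1) ^ j * real (N choose j) * real (k - j) ^ m * coeff (rising_poly N j) m)"
  proof -
    have e1: "{0..k - 1} = {..<k}"
      using assms(2) by auto
    have e2: "real (k - 1 - i + 1) = real (k - i)" if "i < k" for i
      using that by simp
    show ?thesis
      unfolding e1 by (intro sum.cong refl) (simp add: rising_coeff_poly_def coeff_sum e2 mult_ac)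
  qed
  finally show ?thesis by simp
qed

definition hypersimplex_ehrhart :: "nat \<Rightarrow> nat \<Rightarrow> real poly" where
  "hypersimplex_ehrhart N k = smult (1 / fact (N - 1))
     (\<Sum>j<k. smult ((- 1) ^ j * real (N choose j)) (rising_poly N j \<circ>\<^sub>p [:0, real k - real j:]))"

lemma poly_hypersimplex_ehrhart: "poly (hypersimplex_ehrhart N k) t = (\<Sum>j<k. (- 1) ^ j * real (N choose j)
     * pochhammer ((real k - real j) * t - real j + 1) (N - 1)) / fact (N - 1)"
  by (simp add: hypersimplex_ehrhart_def poly_sum poly_pcompose poly_rising_poly
      sum_divide_distrib algebra_simps)

lemma coeff_hypersimplex_ehrhart:
  assumes "1 \<le> N" "1 \<le> k"
  shows "coeff (hypersimplex_ehrhart N k) m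
    = coeff (stirling1_poly N (Suc m) * eulerian_poly m) (k - 1) / fact (N - 1)"
proof -
  have "coeff (hypersimplex_ehrhart N k) m = (\<Sum>j<k. (- 1) ^ j * real (N choose j) * real (k - j) ^ m
      * coeff (rising_poly N j) m) / fact (N - 1)"
    by (simp add: hypersimplex_ehrhart_def coeff_sum coeff_pcompose_linear of_nat_diff
        sum_divide_distrib mult_ac)
  then show ?thesis
    using alternating_sum_eq_coeff_stirling1_eulerian[OF assms] by simp
qed

text \<open>Both coefficients come from the same palindromic product, of degree \<open>N - 2 \<ge> 2k - 2\<close>.\<close>
lemma coeff_hypersimplex_ehrhart_2_le:
  assumes "3 \<le> k" "2 * k \<le> N"
  shows "coeff (hypersimplex_ehrhart N 2) m \<le> coeff (hypersimplex_ehrhart N k) m"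
proof -
  let ?G = "stirling1_poly N (Suc m) * eulerian_poly m"
  have "coeff ?G 1 \<le> coeff ?G (k - 1)"
  proof (cases "Suc m \<le> N")
    case True
    have "palindromic_min ?G ((N - Suc m) + (m - 1))"
      by (rule palindromic_min_mult[OF palindromic_min_stirling1_poly palindromic_min_eulerian_poly])
    moreover have "k - 1 < (N - Suc m) + (m - 1)"
      using True assms by (cases m) auto
    ultimately show ?thesis
      using palindromic_minD(5) assms by simp
  qed (simp add: stirling1_poly_eq_0)
  then show ?thesis
    using assms by (simp add: coeff_hypersimplex_ehrhart divide_right_mono)
qed

section \<open>Counting bounded compositions\<close>

fun count_bounded :: "nat \<Rightarrow> nat \<Rightarrow> nat \<Rightarrow> nat" where
  "count_bounded 0 t s = (if s = 0 then 1 else 0)"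
| "count_bounded (Suc n) t s = (\<Sum>a\<le>t. if a \<le> s then count_bounded n t (s - a) else 0)"

definition count_bounded_int :: "nat \<Rightarrow> nat \<Rightarrow> int \<Rightarrow> int" where
  "count_bounded_int n t X = (if X < 0 then 0 else int (count_bounded n t (nat X)))"

lemma count_bounded_int_Suc:
  "count_bounded_int (Suc n) t X = (\<Sum>a\<le>t. count_bounded_int n t (X - int a))"
proof (cases "X < 0")
  case False
  have "count_bounded_int (Suc n) t X
      = (\<Sum>a\<le>t. int (if a \<le> nat X then count_bounded n t (nat X - a) else 0))"
    using False by (simp add: count_bounded_int_def)
  also have "\<dots> = (\<Sum>a\<le>t. count_bounded_int n t (X - int a))"
    by (intro sum.cong refl) (use False in \<open>auto simp: count_bounded_int_def nat_diff_distrib\<close>)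
  finally show ?thesis .
qed (simp add: count_bounded_int_def)

definition multichoose :: "nat \<Rightarrow> int \<Rightarrow> int" where
  "multichoose n X = (if X < 0 then 0 else int ((nat X + n - 1) choose (nat X)))"

lemma multichoose_pascal:
  assumes "1 \<le> n"
  shows "multichoose (Suc n) Y - multichoose (Suc n) (Y - 1) = multichoose n Y"
proof (cases "Y \<le> 0")
  case False
  then obtain y where y: "nat Y = Suc y" "nat (Y - 1) = y"
    by (cases "nat Y") auto
  have "Suc y + n - 1 = y + n" "y + Suc n - 1 = y + n"
    using assms by simp_all
  then show ?thesis
    using y False by (simp add: multichoose_def)
qed (auto simp: multichoose_def)

lemma sum_multichoose_telescope:
  assumes "1 \<le> n"
  shows "(\<Sum>a\<le>t. multichoose n (Y - int a)) = multichoose (Suc n) Y - multichoose (Suc n) (Y - (int t + 1))"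
proof (induction t)
  case 0
  then show ?case
    using multichoose_pascal[OF assms, of Y] by simp
next
  case (Suc t)
  then show ?case
    using multichoose_pascal[OF assms, of "Y - int (Suc t)"] by (simp add: algebra_simps)
qed

lemma alternating_binomial_sum_Suc:
  fixes g :: "nat \<Rightarrow> int"
  shows "(\<Sum>j\<le>Suc n. (- 1) ^ j * int (Suc n choose j) * g j)
       = (\<Sum>j\<le>n. (- 1) ^ j * int (n choose j) * (g j - g (Suc j)))"
proof -
  have shift: "(\<Sum>j\<le>n. (- 1) ^ Suc j * int (n choose Suc j) * g (Suc j))
      = (\<Sum>j\<le>n. (- 1) ^ j * int (n choose j) * g j) - g 0"
  proof -
    have "(\<Sum>j\<le>n. (- 1) ^ j * int (n choose j) * g j)
        = g 0 + (\<Sum>j\<le>n. (- 1) ^ Suc j * int (n choose Suc j) * g (Suc j))"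
      using sum.atMost_Suc_shift[of "\<lambda>j. (- 1) ^ j * int (n choose j) * g j" n]
      by (simp add: binomial_eq_0)
    then show ?thesis
      by simp
  qed
  have "(\<Sum>j\<le>Suc n. (- 1) ^ j * int (Suc n choose j) * g j)
      = g 0 + (\<Sum>j\<le>n. (- 1) ^ Suc j * int (n choose j) * g (Suc j))
        + (\<Sum>j\<le>n. (- 1) ^ Suc j * int (n choose Suc j) * g (Suc j))"
    by (simp only: sum.atMost_Suc_shift binomial_Suc_Suc of_nat_add)
      (simp add: sum.distrib[symmetric] algebra_simps)
  moreover have "(\<Sum>j\<le>n. (- 1) ^ Suc j * int (n choose j) * g (Suc j))
      = - (\<Sum>j\<le>n. (- 1) ^ j * int (n choose j) * g (Suc j))"
    by (simp add: sum_negf)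
  moreover have "(\<Sum>j\<le>n. (- 1) ^ j * int (n choose j) * (g j - g (Suc j)))
      = (\<Sum>j\<le>n. (- 1) ^ j * int (n choose j) * g j) - (\<Sum>j\<le>n. (- 1) ^ j * int (n choose j) * g (Suc j))"
    by (simp add: sum_subtractf right_diff_distrib)
  ultimately show ?thesis
    using shift by linarith
qed

lemma count_bounded_inclusion_exclusion:
  assumes "1 \<le> n"
  shows "count_bounded_int n t X
    = (\<Sum>j\<le>n. (- 1) ^ j * int (n choose j) * multichoose n (X - int j * (int t + 1)))"
  using assms
proof (induction n arbitrary: X rule: nat_induct_at_least)
  case base
  have "count_bounded (Suc 0) t s = (\<Sum>a\<le>t. if a = s then 1 else 0)" for s
    unfolding count_bounded.simps by (intro sum.cong refl) auto
  then show ?case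
    by (auto simp: count_bounded_int_def multichoose_def sum.delta)
next
  case (Suc n)
  have "count_bounded_int (Suc n) t X = (\<Sum>a\<le>t. \<Sum>j\<le>n. (- 1) ^ j * int (n choose j)
      * multichoose n (X - int a - int j * (int t + 1)))"
    unfolding count_bounded_int_Suc Suc.IH ..
  also have "\<dots> = (\<Sum>j\<le>n. (- 1) ^ j * int (n choose j)
      * (\<Sum>a\<le>t. multichoose n ((X - int j * (int t + 1)) - int a)))"
    by (subst sum.swap) (simp add: sum_distrib_left algebra_simps)
  also have "\<dots> = (\<Sum>j\<le>n. (- 1) ^ j * int (n choose j) * (multichoose (Suc n) (X - int j * (int t + 1))
      - multichoose (Suc n) (X - int (Suc j) * (int t + 1))))"
  proof (intro sum.cong refl)
    fix j
    have "X - int j * (int t + 1) - (int t + 1) = X - int (Suc j) * (int t + 1)"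
      by (simp add: algebra_simps)
    then show "(- 1) ^ j * int (n choose j) * (\<Sum>a\<le>t. multichoose n ((X - int j * (int t + 1)) - int a))
      = (- 1) ^ j * int (n choose j) * (multichoose (Suc n) (X - int j * (int t + 1))
        - multichoose (Suc n) (X - int (Suc j) * (int t + 1)))"
      by (simp only: sum_multichoose_telescope[OF Suc.hyps])
  qed
  also have "\<dots> = (\<Sum>j\<le>Suc n. (- 1) ^ j * int (Suc n choose j)
      * multichoose (Suc n) (X - int j * (int t + 1)))"
    by (rule alternating_binomial_sum_Suc[symmetric])
  finally show ?case .
qed

lemma multichoose_pochhammer:
  assumes n: "1 \<le> n" and X: "1 - int n \<le> X"
  shows "real_of_int (multichoose n X) = pochhammer (of_int X + 1) (n - 1) / fact (n - 1)"
proof (cases "X < 0")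
  case True
  have "of_int X + 1 = - (of_nat (nat (- X - 1)) :: real)" "nat (- X - 1) < n - 1"
    using True X n by linarith+
  then have "pochhammer (of_int X + 1 :: real) (n - 1) = 0"
    by (auto simp: pochhammer_eq_0_iff)
  then show ?thesis
    using True by (simp add: multichoose_def)
next
  case False
  then obtain x where x: "X = int x"
    by (metis nonneg_eq_int not_less)
  have "(x + n - 1) choose x = (x + n - 1) choose (n - 1)"
    using binomial_symmetric[of x "x + n - 1"] n by simp
  then have "real_of_int (multichoose n X) = (real (x + n - 1) gchoose (n - 1))"
    by (simp add: multichoose_def x binomial_gbinomial)
  also have "\<dots> = pochhammer (real (x + n - 1) - real (n - 1) + 1) (n - 1) / fact (n - 1)"
    by (simp add: gbinomial_pochhammer')
  also have "real (x + n - 1) - real (n - 1) + 1 = of_int X + 1"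
    using n x by (simp add: of_nat_diff)
  finally show ?thesis .
qed

text \<open>Only the terms \<open>j < k\<close> of the inclusion-exclusion sum survive, and for them the argument of
  \<open>multichoose\<close> stays in the range where it agrees with a polynomial in \<open>t\<close>.\<close>
lemma count_bounded_eq_hypersimplex_ehrhart:
  assumes "1 \<le> k" "k \<le> N"
  shows "real (count_bounded N t (k * t)) = poly (hypersimplex_ehrhart N k) (real t)"
proof -
  have N: "1 \<le> N"
    using assms by simp
  define f where "f j = (- 1) ^ j * int (N choose j) * multichoose N (int (k * t) - int j * (int t + 1))"
    for j
  have "f j = 0" if "k \<le> j" for j
  proof -
    have "int k * int t \<le> int j * int t"
      using that by (simp add: mult_right_mono)
    then show ?thesis
      using that assms by (simp add: multichoose_def f_def algebra_simps)
  qed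
  then have sum_f: "(\<Sum>j\<le>N. f j) = (\<Sum>j<k. f j)"
    by (intro sum.mono_neutral_right) (use assms in auto)
  have f_poly: "real_of_int (f j) = (- 1) ^ j * real (N choose j)
      * (pochhammer ((real k - real j) * real t - real j + 1) (N - 1) / fact (N - 1))" if "j < k" for j
  proof -
    have "int j * int t \<le> int (k - 1) * int t"
      using that by (intro mult_right_mono) auto
    then have "1 - int N \<le> int (k * t) - int j * (int t + 1)"
      using that assms by (simp add: algebra_simps of_nat_diff)
    moreover have "real_of_int (int (k * t) - int j * (int t + 1)) + 1
        = (real k - real j) * real t - real j + 1"
      by (simp add: algebra_simps)
    ultimately show ?thesis
      using multichoose_pochhammer[OF N] by (simp add: f_def)
  qed
  have "real (count_bounded N t (k * t)) = real_of_int (count_bounded_int N t (int (k * t)))"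
    unfolding count_bounded_int_def by (simp del: of_nat_mult)
  also have "\<dots> = real_of_int (\<Sum>j\<le>N. f j)"
    unfolding f_def count_bounded_inclusion_exclusion[OF N] ..
  also have "\<dots> = real_of_int (\<Sum>j<k. f j)"
    by (simp only: sum_f)
  also have "\<dots> = poly (hypersimplex_ehrhart N k) (real t)"
    by (simp add: f_poly poly_hypersimplex_ehrhart sum_divide_distrib mult_ac)
  finally show ?thesis .
qed

section \<open>Lattice points of the dilated hypersimplex\<close>

definition bounded_vectors :: "'a set \<Rightarrow> nat \<Rightarrow> nat \<Rightarrow> ('a \<Rightarrow> nat) set" where
  "bounded_vectors I t s = {f. (\<forall>i\<in>I. f i \<le> t) \<and> (\<forall>i. i \<notin> I \<longrightarrow> f i = 0) \<and> sum f I = s}"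

lemma bounded_vectors_insert:
  assumes "finite I" "i \<notin> I"
  shows "bounded_vectors (insert i I) t s
    = (\<Union>a\<in>{a. a \<le> t \<and> a \<le> s}. (\<lambda>f. f(i := a)) ` bounded_vectors I t (s - a))"
proof (intro equalityI subsetI)
  fix f
  assume f: "f \<in> bounded_vectors (insert i I) t s"
  define g where "g = f(i := 0)"
  have "sum f (insert i I) = f i + sum f I"
    using assms by simp
  moreover have "sum g I = sum f I"
    unfolding g_def using assms by (intro sum.cong) auto
  ultimately have "g \<in> bounded_vectors I t (s - f i)"
    using f assms unfolding bounded_vectors_def g_def by auto
  moreover have "f = g(i := f i)" "f i \<le> t" "f i \<le> s"
    using f assms unfolding bounded_vectors_def g_def by auto
  ultimately show "f \<in> (\<Union>a\<in>{a. a \<le> t \<and> a \<le> s}. (\<lambda>f. f(i := a)) ` bounded_vectors I t (s - a))"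
    by blast
next
  fix f
  assume "f \<in> (\<Union>a\<in>{a. a \<le> t \<and> a \<le> s}. (\<lambda>f. f(i := a)) ` bounded_vectors I t (s - a))"
  then obtain a g where a: "a \<le> t" "a \<le> s" and g: "g \<in> bounded_vectors I t (s - a)"
    and fg: "f = g(i := a)"
    by auto
  have "sum f I = sum g I"
    unfolding fg using assms by (intro sum.cong) auto
  then show "f \<in> bounded_vectors (insert i I) t s"
    using a g assms unfolding bounded_vectors_def fg by auto
qed

lemma card_bounded_vectors:
  assumes "finite I"
  shows "finite (bounded_vectors I t s) \<and> card (bounded_vectors I t s) = count_bounded (card I) t s"
  using assms
proof (induction I arbitrary: s rule: finite_induct)
  case empty
  have empty: "bounded_vectors {} t s = (if s = 0 then {\<lambda>_. 0} else {})"
    unfolding bounded_vectors_def by auto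
  show ?case
    unfolding empty by simp
next
  case (insert i I)
  let ?part = "\<lambda>a. (\<lambda>f. f(i := a)) ` bounded_vectors I t (s - a)"
  have inj: "inj_on (\<lambda>f. f(i := a)) (bounded_vectors I t s')" for a s'
  proof (rule inj_onI)
    fix f g
    assume "f \<in> bounded_vectors I t s'" "g \<in> bounded_vectors I t s'" "f(i := a) = g(i := a)"
    moreover from this have "f i = 0" "g i = 0"
      using insert.hyps(2) unfolding bounded_vectors_def by auto
    ultimately show "f = g"
      by (metis fun_upd_triv fun_upd_upd)
  qed
  have disj: "pairwise (\<lambda>a b. ?part a \<inter> ?part b = {}) {a. a \<le> t \<and> a \<le> s}"
    unfolding pairwise_def by (auto, metis fun_upd_same)
  have "card (bounded_vectors (insert i I) t s) = (\<Sum>a\<in>{a. a \<le> t \<and> a \<le> s}. card (?part a))"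
    unfolding bounded_vectors_insert[OF insert.hyps]
    by (rule card_UN_disjoint) (use insert.IH disj in \<open>auto simp: pairwise_def\<close>)
  also have "\<dots> = (\<Sum>a\<in>{a \<in> {..t}. a \<le> s}. count_bounded (card I) t (s - a))"
    by (intro sum.cong) (auto simp: card_image[OF inj] insert.IH)
  also have "\<dots> = count_bounded (card (insert i I)) t s"
    by (simp only: card_insert_disjoint[OF insert.hyps] count_bounded.simps
        sum.inter_filter[OF finite_atMost])
  finally show ?case
    unfolding bounded_vectors_insert[OF insert.hyps] using insert.IH by auto
qed

definition hypersimplex_lattice :: "nat \<Rightarrow> nat \<Rightarrow> (real^'n::finite) set" where
  "hypersimplex_lattice k t = {x. (\<forall>i. x $ i \<in> \<int>) \<and> (\<forall>i. 0 \<le> x $ i \<and> x $ i \<le> real t)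
     \<and> (\<Sum>i\<in>UNIV. x $ i) = real (k * t)}"

lemma card_hypersimplex_lattice:
  "card (hypersimplex_lattice k t :: (real^'n::finite) set) = count_bounded CARD('n) t (k * t)"
proof -
  define F where "F = bounded_vectors (UNIV :: 'n set) t (k * t)"
  define v where "v = (\<lambda>f :: 'n \<Rightarrow> nat. (\<chi> i. real (f i)) :: real^'n)"
  have "inj_on v F"
    by (rule inj_onI) (auto simp: v_def vec_eq_iff fun_eq_iff)
  moreover have "v ` F = hypersimplex_lattice k t"
  proof (intro equalityI subsetI)
    fix x
    assume "x \<in> v ` F"
    then obtain f where f: "f \<in> F" and x: "x = v f"
      by auto
    have "(\<Sum>i\<in>UNIV. x $ i) = real (\<Sum>i\<in>UNIV. f i)"
      by (simp add: x v_def)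
    also have "(\<Sum>i\<in>UNIV. f i) = k * t"
      using f unfolding F_def bounded_vectors_def by auto
    finally show "x \<in> hypersimplex_lattice k t"
      using f unfolding F_def bounded_vectors_def x v_def hypersimplex_lattice_def by auto
  next
    fix x
    assume x: "x \<in> (hypersimplex_lattice k t :: (real^'n) set)"
    define f where "f i = nat \<lfloor>x $ i\<rfloor>" for i
    have xf: "x $ i = real (f i)" for i
    proof -
      have "x $ i \<in> \<int>" "0 \<le> x $ i"
        using x unfolding hypersimplex_lattice_def by auto
      then show ?thesis
        unfolding f_def by (elim Ints_cases) simp
    qed
    have "real (\<Sum>i\<in>UNIV. f i) = real (k * t)"
      using x unfolding hypersimplex_lattice_def by (simp add: xf)
    then have "(\<Sum>i\<in>UNIV. f i) = k * t"
      by (simp only: of_nat_eq_iff)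
    then have "f \<in> F"
      using x unfolding F_def bounded_vectors_def hypersimplex_lattice_def by (auto simp: xf)
    moreover have "x = v f"
      by (simp add: v_def vec_eq_iff xf)
    ultimately show "x \<in> v ` F"
      by auto
  qed
  ultimately have "card (hypersimplex_lattice k t :: (real^'n) set) = card F"
    using card_image by fastforce
  then show ?thesis
    unfolding F_def using card_bounded_vectors[of "UNIV :: 'n set"] by simp
qed

definition indicator_vec :: "'n set \<Rightarrow> real^'n::finite" where
  "indicator_vec B = (\<chi> i. if i \<in> B then 1 else 0)"

lemma indicator_vec_nth [simp]: "indicator_vec B $ i = (if i \<in> B then 1 else 0)"
  by (simp add: indicator_vec_def)

lemma sum_indicator_vec: "(\<Sum>i\<in>UNIV. indicator_vec B $ i) = real (card (B :: 'n::finite set))"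
  by (simp add: sum.If_cases)

lemma uniform_matroid_polytope_eq:
  "uniform_matroid_polytope k = convex hull {indicator_vec B | B :: 'n::finite set. card B = k}"
  by (simp add: uniform_matroid_polytope_def indicator_vec_def)

lemma indicator_vec_in_uniform_matroid_polytope:
  "card B = k \<Longrightarrow> indicator_vec B \<in> (uniform_matroid_polytope k :: (real^'n::finite) set)"
  unfolding uniform_matroid_polytope_eq by (auto intro: hull_inc)

definition hypersimplex_ineqs :: "nat \<Rightarrow> (real^'n::finite) set" where
  "hypersimplex_ineqs k = {y. (\<forall>i. 0 \<le> y $ i \<and> y $ i \<le> 1) \<and> (\<Sum>i\<in>UNIV. y $ i) = real k}"

lemma convex_hypersimplex_ineqs: "convex (hypersimplex_ineqs k)"
  unfolding convex_def hypersimplex_ineqs_def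
proof (intro ballI allI impI, clarify)
  fix x y :: "real^'n" and u v :: real
  assume x: "\<forall>i. 0 \<le> x $ i \<and> x $ i \<le> 1" "(\<Sum>i\<in>UNIV. x $ i) = real k"
    and y: "\<forall>i. 0 \<le> y $ i \<and> y $ i \<le> 1" "(\<Sum>i\<in>UNIV. y $ i) = real k"
    and uv: "0 \<le> u" "0 \<le> v" "u + v = 1"
  have "0 \<le> u * x $ i + v * y $ i \<and> u * x $ i + v * y $ i \<le> 1" for i
  proof -
    have "u * x $ i \<le> u" "v * y $ i \<le> v"
      using x y uv by (auto intro: mult_left_le)
    then show ?thesis
      using x y uv by (auto intro: add_nonneg_nonneg mult_nonneg_nonneg)
  qed
  moreover have "(\<Sum>i\<in>UNIV. u * x $ i + v * y $ i) = (u + v) * real k"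
    using x y by (simp add: sum.distrib sum_distrib_left[symmetric] algebra_simps)
  ultimately show "(\<forall>i. 0 \<le> (u *\<^sub>R x + v *\<^sub>R y) $ i \<and> (u *\<^sub>R x + v *\<^sub>R y) $ i \<le> 1) \<and>
        (\<Sum>i\<in>UNIV. (u *\<^sub>R x + v *\<^sub>R y) $ i) = real k"
    using uv by simp
qed

lemma uniform_matroid_polytope_subset:
  "uniform_matroid_polytope k \<subseteq> (hypersimplex_ineqs k :: (real^'n::finite) set)"
  unfolding uniform_matroid_polytope_eq
proof (rule hull_minimal)
  show "{indicator_vec B | B :: 'n set. card B = k} \<subseteq> hypersimplex_ineqs k"
    unfolding hypersimplex_ineqs_def using sum_indicator_vec by auto
qed (rule convex_hypersimplex_ineqs)

lemma Ints_less_imp_add_one_le: "a \<in> \<int> \<Longrightarrow> b \<in> \<int> \<Longrightarrow> a < b \<Longrightarrow> a + 1 \<le> (b :: real)"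
  by (elim Ints_cases) simp

lemma hypersimplex_lattice_card_bounds:
  fixes x :: "real^'n::finite"
  assumes "x \<in> hypersimplex_lattice k t" "0 < t"
  shows "card {i. x $ i = real t} \<le> k" "k \<le> card {i. 1 \<le> x $ i}"
proof -
  have xi: "x $ i \<in> \<int>" "0 \<le> x $ i" "x $ i \<le> real t" for i
    using assms unfolding hypersimplex_lattice_def by auto
  have xs: "(\<Sum>i\<in>UNIV. x $ i) = real k * real t"
    using assms unfolding hypersimplex_lattice_def by simp
  have "real (card {i. x $ i = real t}) * real t = (\<Sum>i\<in>{i. x $ i = real t}. x $ i)"
    by simp
  also have "\<dots> \<le> real k * real t"
    unfolding xs[symmetric] by (rule sum_mono2) (use xi in auto)
  finally show "card {i. x $ i = real t} \<le> k"
    using assms(2) by (simp add: mult_le_cancel_right)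
  have "x $ i = 0" if "\<not> 1 \<le> x $ i" for i
    using Ints_less_imp_add_one_le[OF xi(1)[of i], of 1] xi(2)[of i] that by auto
  then have "real k * real t = (\<Sum>i\<in>{i. 1 \<le> x $ i}. x $ i)"
    unfolding xs[symmetric] by (intro sum.mono_neutral_right) auto
  also have "\<dots> \<le> real (card {i. 1 \<le> x $ i}) * real t"
    using sum_mono[of "{i. 1 \<le> x $ i}" "\<lambda>i. x $ i" "\<lambda>_. real t"] xi by simp
  finally show "k \<le> card {i. 1 \<le> x $ i}"
    using assms(2) by (simp add: mult_le_cancel_right)
qed

text \<open>Coordinates equal to \<open>t + 1\<close> must be lowered and there are at most \<open>k\<close> of them, while at
  least \<open>k\<close> coordinates are positive and may be lowered.\<close>
lemma hypersimplex_lattice_Suc_split: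
  fixes x :: "real^'n::finite"
  assumes "x \<in> hypersimplex_lattice k (Suc t)"
  obtains B where "card B = k" "x - indicator_vec B \<in> hypersimplex_lattice k t"
proof -
  have xi: "x $ i \<in> \<int>" "0 \<le> x $ i" "x $ i \<le> real (Suc t)" for i
    using assms unfolding hypersimplex_lattice_def by auto
  define A where "A = {i. x $ i = real (Suc t)}"
  define C where "C = {i. 1 \<le> x $ i}"
  have "card A \<le> k" "k \<le> card C" "A \<subseteq> C"
    using hypersimplex_lattice_card_bounds[OF assms] unfolding A_def C_def by force+
  then have "k - card A \<le> card (C - A)"
    by (simp add: card_Diff_subset)
  then obtain D where D: "D \<subseteq> C - A" "card D = k - card A"
    using ex_card by blast
  define B where "B = A \<union> D"
  have "card B = k"
    unfolding B_def using D \<open>card A \<le> k\<close> by (subst card_Un_disjoint) auto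
  moreover have "x - indicator_vec B \<in> hypersimplex_lattice k t"
    unfolding hypersimplex_lattice_def
  proof (intro CollectI conjI allI)
    fix i
    show "(x - indicator_vec B) $ i \<in> \<int>"
      using xi by auto
    show "0 \<le> (x - indicator_vec B) $ i"
      using xi D \<open>A \<subseteq> C\<close> unfolding B_def C_def by auto
    have "x $ i \<le> real t" if "i \<notin> A"
      using Ints_less_imp_add_one_le[OF xi(1)[of i], of "real (Suc t)"] xi(3)[of i] that
      unfolding A_def by auto
    then show "(x - indicator_vec B) $ i \<le> real t"
      using xi(3)[of i] unfolding B_def by auto
  next
    show "(\<Sum>i\<in>UNIV. (x - indicator_vec B) $ i) = real (k * t)"
      using assms sum_indicator_vec[of B] \<open>card B = k\<close>
      unfolding hypersimplex_lattice_def by (simp add: sum_subtractf algebra_simps)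
  qed
  ultimately show ?thesis
    using that by blast
qed

lemma hypersimplex_lattice_scaled_in_polytope:
  assumes "1 \<le> t" "x \<in> hypersimplex_lattice k t"
  shows "(1 / real t) *\<^sub>R x \<in> (uniform_matroid_polytope k :: (real^'n::finite) set)"
  using assms
proof (induction t arbitrary: x rule: nat_induct_at_least)
  case base
  then obtain B where "card B = k" "x - indicator_vec B \<in> hypersimplex_lattice k 0"
    using hypersimplex_lattice_Suc_split[of x k 0] by auto
  moreover from this have "0 \<le> (x - indicator_vec B) $ i \<and> (x - indicator_vec B) $ i \<le> 0" for i
    unfolding hypersimplex_lattice_def by (simp only: mem_Collect_eq of_nat_0)
  then have "x - indicator_vec B = 0"
    unfolding vec_eq_iff zero_index by (blast intro: order.antisym)
  then have "x = indicator_vec B"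
    by simp
  ultimately show ?case
    by (simp add: indicator_vec_in_uniform_matroid_polytope)
next
  case (Suc t)
  obtain B where B: "card B = k" "x - indicator_vec B \<in> hypersimplex_lattice k t"
    using hypersimplex_lattice_Suc_split[OF Suc.prems] .
  have "(real t / (real t + 1)) *\<^sub>R ((1 / real t) *\<^sub>R (x - indicator_vec B))
      + (1 / (real t + 1)) *\<^sub>R indicator_vec B \<in> (uniform_matroid_polytope k :: (real^'n) set)"
    by (rule convexD[OF _ Suc.IH[OF B(2)] indicator_vec_in_uniform_matroid_polytope[OF B(1)]])
      (auto simp: uniform_matroid_polytope_eq field_simps)
  moreover have "(real t / (real t + 1)) *\<^sub>R ((1 / real t) *\<^sub>R (x - indicator_vec B))
      + (1 / (real t + 1)) *\<^sub>R indicator_vec B = (1 / real (Suc t)) *\<^sub>R x"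
    using Suc.hyps by (simp add: vec_eq_iff field_simps)
  ultimately show ?case
    by simp
qed

lemma lattice_points_dilated_uniform_matroid_polytope:
  assumes "k \<le> CARD('n::finite)"
  shows "{x :: real^'n. (\<forall>i. x $ i \<in> \<int>) \<and> x \<in> (\<lambda>y. real t *\<^sub>R y) ` uniform_matroid_polytope k}
    = hypersimplex_lattice k t"
proof (intro equalityI subsetI)
  fix x :: "real^'n"
  assume "x \<in> {x. (\<forall>i. x $ i \<in> \<int>) \<and> x \<in> (\<lambda>y. real t *\<^sub>R y) ` uniform_matroid_polytope k}"
  then obtain p where "\<forall>i. x $ i \<in> \<int>" "p \<in> hypersimplex_ineqs k" "x = real t *\<^sub>R p"
    using uniform_matroid_polytope_subset by blast
  then show "x \<in> hypersimplex_lattice k t"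
    unfolding hypersimplex_ineqs_def hypersimplex_lattice_def
    by (auto intro: mult_left_le simp: sum_distrib_left[symmetric])
next
  fix x :: "real^'n"
  assume x: "x \<in> hypersimplex_lattice k t"
  have "x \<in> (\<lambda>y. real t *\<^sub>R y) ` uniform_matroid_polytope k"
  proof (cases "t = 0")
    case True
    obtain B :: "'n set" where "card B = k"
      using ex_card[of k "UNIV :: 'n set"] assms by auto
    moreover have "x = 0"
      using x True unfolding hypersimplex_lattice_def by (auto simp: vec_eq_iff intro: order.antisym)
    ultimately show ?thesis
      using True by (auto intro!: image_eqI indicator_vec_in_uniform_matroid_polytope)
  next
    case False
    then have "x = real t *\<^sub>R ((1 / real t) *\<^sub>R x)"
      by simp
    moreover have "(1 / real t) *\<^sub>R x \<in> uniform_matroid_polytope k"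
      using hypersimplex_lattice_scaled_in_polytope[of t x k] x False by simp
    ultimately show ?thesis
      by (rule image_eqI)
  qed
  then show "x \<in> {x. (\<forall>i. x $ i \<in> \<int>) \<and> x \<in> (\<lambda>y. real t *\<^sub>R y) ` uniform_matroid_polytope k}"
    using x unfolding hypersimplex_lattice_def by auto
qed

lemma poly_eq_if_agree_on_nat:
  fixes p q :: "real poly"
  assumes "\<And>t::nat. poly p (real t) = poly q (real t)"
  shows "p = q"
proof (rule ccontr)
  assume "p \<noteq> q"
  then have "finite {x. poly (p - q) x = 0}"
    by (intro poly_roots_finite) simp
  moreover have "range real \<subseteq> {x. poly (p - q) x = 0}"
    using assms by auto
  ultimately have "finite (range real)"
    by (rule finite_subset[rotated])
  then show False
    using finite_imageD[of real UNIV] by (simp add: inj_on_def)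
qed

lemma ehrhart_poly_uniform_matroid_polytope:
  assumes "1 \<le> k" "k \<le> CARD('n::finite)"
  shows "ehrhart_poly (uniform_matroid_polytope k :: (real^'n) set) = hypersimplex_ehrhart CARD('n) k"
proof -
  have count: "poly (hypersimplex_ehrhart CARD('n) k) (real t)
      = real (lattice_count (uniform_matroid_polytope k :: (real^'n) set) t)" for t
    unfolding lattice_count_def lattice_points_dilated_uniform_matroid_polytope[OF assms(2)]
      card_hypersimplex_lattice count_bounded_eq_hypersimplex_ehrhart[OF assms, symmetric] ..
  show ?thesis
    unfolding ehrhart_poly_def
  proof (rule the_equality)
    fix p
    assume "\<forall>t. poly p (real t) = real (lattice_count (uniform_matroid_polytope k :: (real^'n) set) t)"
    then show "p = hypersimplex_ehrhart CARD('n) k"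
      using count by (intro poly_eq_if_agree_on_nat) simp
  qed (simp add: count)
qed

theorem lemma6p3:
  fixes k :: nat
  assumes "3 \<le> k" and "2 * k \<le> CARD('n::finite)"
  shows "\<forall>m. coeff (ehrhart_poly (uniform_matroid_polytope 2 :: (real^'n) set)) m
             \<le> coeff (ehrhart_poly (uniform_matroid_polytope k :: (real^'n) set)) m"
  using ehrhart_poly_uniform_matroid_polytope[of 2, where 'n='n]
    ehrhart_poly_uniform_matroid_polytope[of k, where 'n='n]
    coeff_hypersimplex_ehrhart_2_le[OF assms] assms
  by simp

end
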